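(* Let $\{\lambda_j\}_{j\in\mathbb N}$ be a non-increasing sequence of non-negative reals with $\lim_{j\to\infty}\lambda_j=0$. Then $$\lim_{j\to\infty}\frac{\ln(\ln\frac1{\lambda_j})}{\ln(\ln j)}=\infty$$ holds if and only if for every $\delta>0$, $$\lim_{j\to\infty}\frac{(\ln\frac1{\lambda_j})^{\alpha}}{\ln j}=\infty\quad\text{for all }\alpha\in(0,\delta).$$
   Context: If $\lambda_j=0$, $\ln\frac1{\lambda_j}$ is interpreted as $\infty$. *)

theory Defs
  imports "HOL-Analysis.Analysis"
begin

text \<open>Extended-real valued quotients, with the convention that
  ln(1/lambda_j) = infinity when lambda_j = 0 (so both quotients are infinity then).\<close>

definition loglog_ratio :: "(nat \<Rightarrow> real) \<Rightarrow> nat \<Rightarrow> ereal" where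
  "loglog_ratio lam j =
     (if lam j = 0 then \<infinity>
      else ereal (ln (ln (1 / lam j)) / ln (ln (real j))))"

definition pow_ratio :: "real \<Rightarrow> (nat \<Rightarrow> real) \<Rightarrow> nat \<Rightarrow> ereal" where
  "pow_ratio \<alpha> lam j =
     (if lam j = 0 then \<infinity>
      else ereal ((ln (1 / lam j)) powr \<alpha> / ln (real j)))"

end

theory Submission
  imports Defs
begin

text \<open>Write \<open>L = ln (1/\<lambda>\<^sub>j)\<close> and \<open>l = ln j\<close>. Taking logarithms,
  \<open>l\<^sup>k < L\<^sup>\<alpha>\<close> is the same as \<open>k/\<alpha> < ln L / ln l\<close>. Hence a double-log ratio above \<open>2/\<alpha>\<close>
  gives \<open>L\<^sup>\<alpha>/l > l \<rightarrow> \<infinity>\<close>, while \<open>L\<^sup>\<alpha>/l > 1\<close> for \<open>\<alpha> = 1/M\<close> gives a double-log ratio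
  above \<open>M\<close>.\<close>

lemma powr_less_powr_iff_ln_ratio:
  fixes l L a k :: real
  assumes "1 < l" "0 < L" "0 < a"
  shows "l powr k < L powr a \<longleftrightarrow> k / a < ln L / ln l"
proof -
  have "l powr k < L powr a \<longleftrightarrow> k * ln l < a * ln L"
    using assms by (simp add: powr_def)
  also have "\<dots> \<longleftrightarrow> k / a < ln L / ln l"
    using assms by (simp add: field_simps)
  finally show ?thesis .
qed

lemma eventually_ln_real_gt: "eventually (\<lambda>j. r < ln (real j)) sequentially"
proof -
  have "filterlim (\<lambda>j. ln (real j)) at_top sequentially"
    by (rule filterlim_compose[OF ln_at_top filterlim_real_sequentially])
  then show ?thesis
    by (simp add: filterlim_at_top_dense)
qed

lemma pow_ratio_gt_if_loglog_ratio_gt: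
  assumes "0 \<le> lam j" "lam j < 1" "1 < ln (real j)" "0 < a"
    and "ereal (2 / a) < loglog_ratio lam j"
  shows "ereal (ln (real j)) < pow_ratio a lam j"
proof (cases "lam j = 0")
  case False
  define L where "L = ln (1 / lam j)"
  define l where "l = ln (real j)"
  have "0 < L" "1 < l"
    using assms False by (auto simp: L_def l_def)
  moreover have "2 / a < ln L / ln l"
    using assms(5) False by (simp add: loglog_ratio_def L_def l_def)
  ultimately have "l powr 2 < L powr a"
    using powr_less_powr_iff_ln_ratio \<open>0 < a\<close> by blast
  then have "l < L powr a / l"
    using \<open>1 < l\<close> by (simp add: powr_numeral power2_eq_square pos_less_divide_eq)
  then show ?thesis
    using False by (simp add: pow_ratio_def L_def l_def)
qed (simp add: pow_ratio_def)

lemma loglog_ratio_gt_if_pow_ratio_gt: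
  assumes "0 \<le> lam j" "lam j < 1" "1 < ln (real j)" "0 < a"
    and "ereal 1 < pow_ratio a lam j"
  shows "ereal (1 / a) < loglog_ratio lam j"
proof (cases "lam j = 0")
  case False
  define L where "L = ln (1 / lam j)"
  define l where "l = ln (real j)"
  have "0 < L" "1 < l"
    using assms False by (auto simp: L_def l_def)
  moreover have "l < L powr a"
    using assms(5) False \<open>1 < l\<close> by (simp add: pow_ratio_def L_def l_def pos_less_divide_eq)
  ultimately have "1 / a < ln L / ln l"
    using powr_less_powr_iff_ln_ratio[of l L a 1] \<open>0 < a\<close> by simp
  then show ?thesis
    using False by (simp add: loglog_ratio_def L_def l_def)
qed (simp add: loglog_ratio_def)

lemma pow_ratio_tendsto_PInfty:
  assumes "\<forall>j. lam j \<ge> 0" "lam \<longlonglongrightarrow> 0" "0 < a"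
    and "(loglog_ratio lam \<longlongrightarrow> \<infinity>) sequentially"
  shows "(pow_ratio a lam \<longlongrightarrow> \<infinity>) sequentially"
  unfolding tendsto_PInfty
proof
  fix r :: real
  show "eventually (\<lambda>j. ereal r < pow_ratio a lam j) sequentially"
    using order_tendstoD(2)[OF assms(2) zero_less_one] eventually_ln_real_gt[of "max r 1"]
      assms(4)[unfolded tendsto_PInfty, rule_format, of "2 / a"]
  proof eventually_elim
    case (elim j)
    then have "ereal (ln (real j)) < pow_ratio a lam j"
      using assms(1,3) by (intro pow_ratio_gt_if_loglog_ratio_gt) auto
    moreover have "ereal r < ereal (ln (real j))"
      using elim(2) by simp
    ultimately show ?case
      by (rule less_trans[rotated])
  qed
qed

lemma loglog_ratio_tendsto_PInfty:
  assumes "\<forall>j. lam j \<ge> 0" "lam \<longlonglongrightarrow> 0"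
    and "\<forall>a>0. (pow_ratio a lam \<longlongrightarrow> \<infinity>) sequentially"
  shows "(loglog_ratio lam \<longlongrightarrow> \<infinity>) sequentially"
  unfolding tendsto_PInfty
proof
  fix r :: real
  define a where "a = 1 / (\<bar>r\<bar> + 1)"
  have "0 < a"
    by (simp add: a_def add_pos_nonneg)
  show "eventually (\<lambda>j. ereal r < loglog_ratio lam j) sequentially"
    using order_tendstoD(2)[OF assms(2) zero_less_one] eventually_ln_real_gt[of 1]
      assms(3)[rule_format, OF \<open>0 < a\<close>, unfolded tendsto_PInfty, rule_format, of 1]
  proof eventually_elim
    case (elim j)
    then have "ereal (1 / a) < loglog_ratio lam j"
      using assms(1) \<open>0 < a\<close> by (intro loglog_ratio_gt_if_pow_ratio_gt) auto
    moreover have "ereal r < ereal (1 / a)"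
      by (simp add: a_def)
    ultimately show ?case
      by (rule less_trans[rotated])
  qed
qed

lemma all_greaterThanLessThan_pos_iff:
  fixes P :: "real \<Rightarrow> bool"
  shows "(\<forall>\<delta>>0. \<forall>x\<in>{0<..<\<delta>}. P x) \<longleftrightarrow> (\<forall>x>0. P x)"
proof (intro iffI allI impI ballI)
  fix x :: real
  assume "\<forall>\<delta>>0. \<forall>x\<in>{0<..<\<delta>}. P x" and "0 < x"
  moreover have "0 < x + 1" "x \<in> {0<..<x + 1}"
    using \<open>0 < x\<close> by auto
  ultimately show "P x"
    by blast
qed simp

theorem lemma4:
  fixes lam :: "nat \<Rightarrow> real"
  assumes nonneg: "\<forall>j. lam j \<ge> 0"
    and noninc: "decseq lam"
    and lim0: "lam \<longlonglongrightarrow> 0"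
  shows "((\<lambda>j. loglog_ratio lam j) \<longlongrightarrow> \<infinity>) sequentially \<longleftrightarrow>
         (\<forall>\<delta>>0. \<forall>\<alpha>\<in>{0<..<\<delta>}. ((\<lambda>j. pow_ratio \<alpha> lam j) \<longlongrightarrow> \<infinity>) sequentially)"
  unfolding all_greaterThanLessThan_pos_iff
proof
  assume "(loglog_ratio lam \<longlongrightarrow> \<infinity>) sequentially"
  then show "\<forall>\<alpha>>0. (pow_ratio \<alpha> lam \<longlongrightarrow> \<infinity>) sequentially"
    using pow_ratio_tendsto_PInfty[OF nonneg lim0] by blast
qed (rule loglog_ratio_tendsto_PInfty[OF nonneg lim0])

end
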